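(* Let $(E,\tau)$ be a uniquely generated convex space such that every $A\subseteq E$ has a unique inclusion-maximal generator. Then the partition $\mathcal{P}$ of $2^E$ into the equivalence classes of the relation $X\sim Y\iff\tau(X)=\tau(Y)$ is a hypercube partition of $2^E$, i.e., every equivalence class is an interval $[A,B]=\{C\subseteq E:A\subseteq C\subseteq B\}$ for some $A\subseteq B\subseteq E$.
   Context: $E$ is a finite set and $\tau:2^E\to 2^E$. $(E,\tau)$ is a convex space if (C1) $Y\subseteq\tau(Y)$ for all $Y\subseteq E$, and (convexity) for all $Y_1\subseteq Y_2\subseteq Y_3\subseteq E$ with $\tau(Y_1)=\tau(Y_3)$ we have $\tau(Y_2)=\tau(Y_1)$. For $A\subseteq E$, a generator of $A$ is any $B\subseteq E$ with $\tau(B)=\tau(A)$; a basis of $A$ is an inclusion-minimal generator of $A$. The space is uniquely generated if every $A\subseteq E$ has exactly one basis. A hypercube partition of $2^E$ is a partition of $2^E$ into disjoint intervals $[A,B]$. *)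

theory Defs
  imports Main
begin

definition convex_space :: "'a set \<Rightarrow> ('a set \<Rightarrow> 'a set) \<Rightarrow> bool" where
  "convex_space E \<tau> \<longleftrightarrow> finite E
     \<and> (\<forall>Y. Y \<subseteq> E \<longrightarrow> \<tau> Y \<subseteq> E)
     \<and> (\<forall>Y. Y \<subseteq> E \<longrightarrow> Y \<subseteq> \<tau> Y)
     \<and> (\<forall>Y1 Y2 Y3. Y1 \<subseteq> Y2 \<and> Y2 \<subseteq> Y3 \<and> Y3 \<subseteq> E \<and> \<tau> Y1 = \<tau> Y3 \<longrightarrow> \<tau> Y2 = \<tau> Y1)"

definition is_generator :: "'a set \<Rightarrow> ('a set \<Rightarrow> 'a set) \<Rightarrow> 'a set \<Rightarrow> 'a set \<Rightarrow> bool" where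
  "is_generator E \<tau> A B \<longleftrightarrow> B \<subseteq> E \<and> \<tau> B = \<tau> A"

definition is_basis :: "'a set \<Rightarrow> ('a set \<Rightarrow> 'a set) \<Rightarrow> 'a set \<Rightarrow> 'a set \<Rightarrow> bool" where
  "is_basis E \<tau> A B \<longleftrightarrow> is_generator E \<tau> A B
     \<and> (\<forall>C. C \<subset> B \<longrightarrow> \<not> is_generator E \<tau> A C)"

definition is_max_generator :: "'a set \<Rightarrow> ('a set \<Rightarrow> 'a set) \<Rightarrow> 'a set \<Rightarrow> 'a set \<Rightarrow> bool" where
  "is_max_generator E \<tau> A B \<longleftrightarrow> is_generator E \<tau> A B
     \<and> (\<forall>C. B \<subset> C \<longrightarrow> \<not> is_generator E \<tau> A C)"

definition uniquely_generated :: "'a set \<Rightarrow> ('a set \<Rightarrow> 'a set) \<Rightarrow> bool" where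
  "uniquely_generated E \<tau> \<longleftrightarrow> (\<forall>A. A \<subseteq> E \<longrightarrow> (\<exists>!B. is_basis E \<tau> A B))"

definition interval :: "'a set \<Rightarrow> 'a set \<Rightarrow> 'a set set" where
  "interval A B = {C. A \<subseteq> C \<and> C \<subseteq> B}"

definition hypercube_partition :: "'a set \<Rightarrow> 'a set set set \<Rightarrow> bool" where
  "hypercube_partition E P \<longleftrightarrow>
     \<Union>P = Pow E \<and> {} \<notin> P
     \<and> (\<forall>X\<in>P. \<forall>Y\<in>P. X \<noteq> Y \<longrightarrow> X \<inter> Y = {})
     \<and> (\<forall>X\<in>P. \<exists>A B. A \<subseteq> B \<and> B \<subseteq> E \<and> X = interval A B)"

definition tau_classes :: "'a set \<Rightarrow> ('a set \<Rightarrow> 'a set) \<Rightarrow> 'a set set set" where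
  "tau_classes E \<tau> = (\<lambda>X. {Y. Y \<subseteq> E \<and> \<tau> Y = \<tau> X}) ` Pow E"

end

theory Submission
  imports Defs
begin

text \<open>Every generator Y of X lies above some basis and below some maximal generator of X; by
  uniqueness these are the basis A and the maximal generator B of X, so the class of X is
  contained in [A, B]. Conversely, convexity applied to A \<subseteq> Y \<subseteq> B with \<tau> A = \<tau> B puts
  every Y of [A, B] into the class of X.\<close>

definition tau_class :: "'a set \<Rightarrow> ('a set \<Rightarrow> 'a set) \<Rightarrow> 'a set \<Rightarrow> 'a set set" where
  "tau_class E \<tau> X = {Y. Y \<subseteq> E \<and> \<tau> Y = \<tau> X}"

lemma tau_classes_eq: "tau_classes E \<tau> = tau_class E \<tau> ` Pow E"
  unfolding tau_classes_def tau_class_def by simp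

lemma finite_tau_class: "finite E \<Longrightarrow> finite (tau_class E \<tau> X)"
  unfolding tau_class_def by (rule finite_subset[of _ "Pow E"]) auto

lemma is_generator_iff_mem_tau_class: "is_generator E \<tau> X Y \<longleftrightarrow> Y \<in> tau_class E \<tau> X"
  unfolding is_generator_def tau_class_def by simp

lemma convex_spaceD:
  assumes "convex_space E \<tau>" "Y1 \<subseteq> Y2" "Y2 \<subseteq> Y3" "Y3 \<subseteq> E" "\<tau> Y1 = \<tau> Y3"
  shows "\<tau> Y2 = \<tau> Y1"
proof -
  have "\<forall>Y1 Y2 Y3. Y1 \<subseteq> Y2 \<and> Y2 \<subseteq> Y3 \<and> Y3 \<subseteq> E \<and> \<tau> Y1 = \<tau> Y3 \<longrightarrow> \<tau> Y2 = \<tau> Y1"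
    using assms(1) unfolding convex_space_def by (elim conjE)
  then show ?thesis using assms(2-5) by blast
qed

lemma convex_space_finite: "convex_space E \<tau> \<Longrightarrow> finite E"
  unfolding convex_space_def by (elim conjE)

lemma ex_basis_subset:
  assumes "finite E" "Y \<in> tau_class E \<tau> X"
  obtains A where "is_basis E \<tau> X A" "A \<subseteq> Y"
proof -
  obtain A where A: "A \<in> tau_class E \<tau> X" "A \<subseteq> Y"
    and min: "\<forall>C \<in> tau_class E \<tau> X. C \<subseteq> A \<longrightarrow> A = C"
    using finite_has_minimal2[OF finite_tau_class[OF assms(1)] assms(2)] by blast
  have "is_basis E \<tau> X A"
    unfolding is_basis_def is_generator_iff_mem_tau_class using A(1) min by blast
  then show thesis using that A(2) by blast
qed

lemma ex_max_generator_superset: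
  assumes "finite E" "Y \<in> tau_class E \<tau> X"
  obtains B where "is_max_generator E \<tau> X B" "Y \<subseteq> B"
proof -
  obtain B where B: "B \<in> tau_class E \<tau> X" "Y \<subseteq> B"
    and max: "\<forall>C \<in> tau_class E \<tau> X. B \<subseteq> C \<longrightarrow> B = C"
    using finite_has_maximal2[OF finite_tau_class[OF assms(1)] assms(2)] by blast
  have "is_max_generator E \<tau> X B"
    unfolding is_max_generator_def is_generator_iff_mem_tau_class using B(1) max by blast
  then show thesis using that B(2) by blast
qed

lemma tau_class_eq_interval:
  assumes conv: "convex_space E \<tau>"
    and basis: "is_basis E \<tau> X A" "\<And>A'. is_basis E \<tau> X A' \<Longrightarrow> A' = A"
    and max_gen: "is_max_generator E \<tau> X B" "\<And>B'. is_max_generator E \<tau> X B' \<Longrightarrow> B' = B"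
  shows "tau_class E \<tau> X = interval A B"
proof
  have fin: "finite E" using conv by (rule convex_space_finite)
  show "tau_class E \<tau> X \<subseteq> interval A B"
  proof
    fix Y assume Y: "Y \<in> tau_class E \<tau> X"
    obtain A' where "is_basis E \<tau> X A'" "A' \<subseteq> Y" using ex_basis_subset[OF fin Y] .
    moreover obtain B' where "is_max_generator E \<tau> X B'" "Y \<subseteq> B'"
      using ex_max_generator_superset[OF fin Y] .
    ultimately show "Y \<in> interval A B" using basis(2) max_gen(2) unfolding interval_def by blast
  qed
  show "interval A B \<subseteq> tau_class E \<tau> X"
  proof
    fix Y assume "Y \<in> interval A B"
    then have Y: "A \<subseteq> Y" "Y \<subseteq> B" unfolding interval_def by auto
    have A: "A \<subseteq> E" "\<tau> A = \<tau> X" and B: "B \<subseteq> E" "\<tau> B = \<tau> X"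
      using basis(1) max_gen(1) unfolding is_basis_def is_max_generator_def is_generator_def
      by auto
    have "\<tau> Y = \<tau> A" using convex_spaceD[OF conv Y B(1)] A B by simp
    then show "Y \<in> tau_class E \<tau> X" using Y B A unfolding tau_class_def by auto
  qed
qed

lemma Union_tau_classes: "\<Union>(tau_classes E \<tau>) = Pow E"
  unfolding tau_classes_eq tau_class_def by auto

lemma empty_notin_tau_classes: "{} \<notin> tau_classes E \<tau>"
  unfolding tau_classes_eq tau_class_def by auto

lemma tau_classes_disjoint:
  assumes "P \<in> tau_classes E \<tau>" "Q \<in> tau_classes E \<tau>" "P \<noteq> Q"
  shows "P \<inter> Q = {}"
proof -
  obtain X Y where "P = tau_class E \<tau> X" "Q = tau_class E \<tau> Y"
    using assms(1,2) unfolding tau_classes_eq by blast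
  then show ?thesis using assms(3) unfolding tau_class_def by auto
qed

lemma hypercube_partition_tau_classesI:
  assumes "\<And>X. X \<subseteq> E \<Longrightarrow> \<exists>A B. A \<subseteq> B \<and> B \<subseteq> E \<and> tau_class E \<tau> X = interval A B"
  shows "hypercube_partition E (tau_classes E \<tau>)"
proof -
  have "\<forall>P \<in> tau_classes E \<tau>. \<exists>A B. A \<subseteq> B \<and> B \<subseteq> E \<and> P = interval A B"
    unfolding tau_classes_eq using assms by blast
  then show ?thesis
    unfolding hypercube_partition_def
    by (intro conjI Union_tau_classes empty_notin_tau_classes ballI impI tau_classes_disjoint) blast+
qed

theorem mainTheorem19:
  fixes E :: "'a set" and \<tau> :: "'a set \<Rightarrow> 'a set"
  assumes "convex_space E \<tau>"
    and "uniquely_generated E \<tau>"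
    and "\<forall>A. A \<subseteq> E \<longrightarrow> (\<exists>!B. is_max_generator E \<tau> A B)"
  shows "hypercube_partition E (tau_classes E \<tau>)"
proof (rule hypercube_partition_tau_classesI)
  fix X assume X: "X \<subseteq> E"
  obtain A where A: "is_basis E \<tau> X A" "\<And>A'. is_basis E \<tau> X A' \<Longrightarrow> A' = A"
    using assms(2) X unfolding uniquely_generated_def by metis
  obtain B where B: "is_max_generator E \<tau> X B" "\<And>B'. is_max_generator E \<tau> X B' \<Longrightarrow> B' = B"
    using assms(3) X by metis
  have class_eq: "tau_class E \<tau> X = interval A B" using tau_class_eq_interval[OF assms(1) A B] .
  have "X \<in> tau_class E \<tau> X" using X unfolding tau_class_def by simp
  then have "A \<subseteq> B" unfolding class_eq interval_def by blast
  moreover have "B \<subseteq> E" using B(1) unfolding is_max_generator_def is_generator_def by simp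
  ultimately show "\<exists>A B. A \<subseteq> B \<and> B \<subseteq> E \<and> tau_class E \<tau> X = interval A B"
    using class_eq by blast
qed

end
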